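(* Let $X,Y\in\mathcal L^2$ with $X$ bi-atomic. If $(X,Y)$ is quasi-independent, then $X$ and $Y$ are independent. In particular, $(X,Y)\in\mathrm{IC}_0$ if and only if $X$ and $Y$ are independent.
   Context: $\mathcal L^2$ is the set of non-degenerate real random variables with finite variance. $X$ is bi-atomic if its support $\{x:\mathbb P(x-\epsilon<X\le x+\epsilon)>0\ \forall\epsilon>0\}$ has exactly two points. With $H$ the joint distribution function of $(X,Y)$ and $F,G$ the distribution functions of $X,Y$, $(X,Y)$ is quasi-independent if $\frac{H(x,y)+H(y,x)}{2}=\frac12F(x)G(y)+\frac12F(y)G(x)$ for all $x,y\in\mathbb R$. $(X,Y)\in\mathrm{IC}_0$ means $\mathrm{Corr}(X,Y)=\mathrm{Corr}(g(X),g(Y))=0$ for every measurable $g$ with $g(X),g(Y)\in\mathcal L^2$. *)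

theory Defs
  imports "HOL-Probability.Probability"
begin

definition expect :: "'a measure \<Rightarrow> ('a \<Rightarrow> real) \<Rightarrow> real" where
  "expect M X = integral\<^sup>L M X"

definition covar :: "'a measure \<Rightarrow> ('a \<Rightarrow> real) \<Rightarrow> ('a \<Rightarrow> real) \<Rightarrow> real" where
  "covar M X Y = expect M (\<lambda>w. (X w - expect M X) * (Y w - expect M Y))"

definition var :: "'a measure \<Rightarrow> ('a \<Rightarrow> real) \<Rightarrow> real" where
  "var M X = covar M X X"

definition corr :: "'a measure \<Rightarrow> ('a \<Rightarrow> real) \<Rightarrow> ('a \<Rightarrow> real) \<Rightarrow> real" where
  "corr M X Y = covar M X Y / (sqrt (var M X) * sqrt (var M Y))"

definition L2 :: "'a measure \<Rightarrow> ('a \<Rightarrow> real) \<Rightarrow> bool" where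
  "L2 M X \<longleftrightarrow> X \<in> borel_measurable M \<and> integrable M (\<lambda>w. (X w)\<^sup>2)
      \<and> \<not> (\<exists>c. AE w in M. X w = c)"

definition supp :: "'a measure \<Rightarrow> ('a \<Rightarrow> real) \<Rightarrow> real set" where
  "supp M X = {x. \<forall>e>0. measure M {w \<in> space M. x - e < X w \<and> X w \<le> x + e} > 0}"

definition biatomic :: "'a measure \<Rightarrow> ('a \<Rightarrow> real) \<Rightarrow> bool" where
  "biatomic M X \<longleftrightarrow> finite (supp M X) \<and> card (supp M X) = 2"

definition cdf1 :: "'a measure \<Rightarrow> ('a \<Rightarrow> real) \<Rightarrow> real \<Rightarrow> real" where
  "cdf1 M X x = measure M {w \<in> space M. X w \<le> x}"

definition cdf2 :: "'a measure \<Rightarrow> ('a \<Rightarrow> real) \<Rightarrow> ('a \<Rightarrow> real) \<Rightarrow> real \<Rightarrow> real \<Rightarrow> real" where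
  "cdf2 M X Y x y = measure M {w \<in> space M. X w \<le> x \<and> Y w \<le> y}"

definition quasi_indep :: "'a measure \<Rightarrow> ('a \<Rightarrow> real) \<Rightarrow> ('a \<Rightarrow> real) \<Rightarrow> bool" where
  "quasi_indep M X Y \<longleftrightarrow> (\<forall>x y.
      (cdf2 M X Y x y + cdf2 M X Y y x) / 2
        = cdf1 M X x * cdf1 M Y y / 2 + cdf1 M X y * cdf1 M Y x / 2)"

definition IC0 :: "'a measure \<Rightarrow> ('a \<Rightarrow> real) \<Rightarrow> ('a \<Rightarrow> real) \<Rightarrow> bool" where
  "IC0 M X Y \<longleftrightarrow> corr M X Y = 0 \<and>
     (\<forall>g \<in> borel_measurable borel. L2 M (g \<circ> X) \<and> L2 M (g \<circ> Y) \<longrightarrow>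
        corr M (g \<circ> X) (g \<circ> Y) = 0)"

end

theory Submission
  imports Defs
begin

(* Almost surely X takes only two values a < b, so X and Y are independent as soon as the event
   {X = a} is independent of every {Y <= y}: the joint distribution function then factorises.
   Under quasi-independence, take x = a in the symmetrised identity: H(a, y) = P(X = a, Y <= y),
   while H(y, a) only involves P(X = a, Y <= a), which the case y = a identifies as
   P(X = a) P(Y <= a). Under IC_0, take for g the indicator of a Borel set A containing exactly one
   of a, b: Cov(g X, g Y) = 0 says that {X = a} is independent of {Y in A}, and additivity extends
   this to all Borel sets. Conversely, independence passes to g X and g Y, so all correlations
   vanish. *)

context prob_space begin

lemma indep_var_if_cdf_factorizes:
  fixes X Y :: "'a \<Rightarrow> real"
  assumes [measurable]: "X \<in> borel_measurable M" "Y \<in> borel_measurable M"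
    and cdf: "\<And>x y. prob {w \<in> space M. X w \<le> x \<and> Y w \<le> y}
      = prob {w \<in> space M. X w \<le> x} * prob {w \<in> space M. Y w \<le> y}"
  shows "indep_var borel X borel Y"
proof -
  define lower_sets where "lower_sets Z = range (\<lambda>x. {w \<in> space M. Z w \<le> x})"
    for Z :: "'a \<Rightarrow> real"
  have generated: "sigma_sets (space M) {Z -` A \<inter> space M | A. A \<in> sets borel}
      = sigma_sets (space M) (lower_sets Z)" if "Z \<in> borel_measurable M" for Z
  proof -
    have "lower_sets Z = {Z -` A \<inter> space M | A. A \<in> range atMost}"
      unfolding lower_sets_def by (auto intro!: exI[of _ "{.._}"])
    then have "sets (vimage_algebra (space M) Z borel) = sigma_sets (space M) (lower_sets Z)"
      unfolding borel_eq_atMost by (subst vimage_algebra_sigma) (auto simp: sets_measure_of_conv)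
    then show ?thesis by (simp add: sets_vimage_algebra)
  qed
  have stable: "Int_stable (lower_sets Z)" for Z
  proof (rule Int_stableI)
    fix A B assume "A \<in> lower_sets Z" "B \<in> lower_sets Z"
    then obtain x y where "A = {w \<in> space M. Z w \<le> x}" "B = {w \<in> space M. Z w \<le> y}"
      unfolding lower_sets_def by auto
    then have "A \<inter> B = {w \<in> space M. Z w \<le> min x y}" by auto
    then show "A \<inter> B \<in> lower_sets Z" unfolding lower_sets_def by blast
  qed
  have "indep_set (lower_sets X) (lower_sets Y)"
  proof (rule indep_setI)
    show "lower_sets X \<subseteq> events" "lower_sets Y \<subseteq> events"
      unfolding lower_sets_def by auto
  next
    fix A B assume "A \<in> lower_sets X" "B \<in> lower_sets Y"
    then obtain x y where "A = {w \<in> space M. X w \<le> x}" "B = {w \<in> space M. Y w \<le> y}"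
      unfolding lower_sets_def by auto
    moreover from this have "A \<inter> B = {w \<in> space M. X w \<le> x \<and> Y w \<le> y}" by auto
    ultimately show "prob (A \<inter> B) = prob A * prob B" using cdf by simp
  qed
  then show ?thesis
    unfolding indep_var_eq generated[OF assms(1)] generated[OF assms(2)]
    by (simp add: indep_set_sigma_sets stable)
qed

lemma AE_in_supp:
  assumes [measurable]: "X \<in> borel_measurable M"
  shows "AE w in M. X w \<in> supp M X"
proof -
  define null_intervals where
    "null_intervals = {q \<in> \<rat> \<times> \<rat>. prob {w \<in> space M. fst q < X w \<and> X w \<le> snd q} = 0}"
  have "countable null_intervals"
    unfolding null_intervals_def
    by (rule countable_subset[of _ "\<rat> \<times> \<rat>"]) (auto intro: countable_rat)
  then have "AE w in M. \<forall>q\<in>null_intervals. \<not> (fst q < X w \<and> X w \<le> snd q)"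
  proof (rule AE_ball_countable'[rotated])
    fix q assume "q \<in> null_intervals"
    then show "AE w in M. \<not> (fst q < X w \<and> X w \<le> snd q)"
      unfolding null_intervals_def
      by (subst AE_iff_measurable[of "{w \<in> space M. fst q < X w \<and> X w \<le> snd q}"])
         (auto simp: emeasure_eq_measure)
  qed
  then show ?thesis
  proof (rule AE_mp, intro AE_I2 impI)
    fix w assume avoids: "\<forall>q\<in>null_intervals. \<not> (fst q < X w \<and> X w \<le> snd q)"
    show "X w \<in> supp M X"
    proof (rule ccontr)
      assume "X w \<notin> supp M X"
      then obtain e where "e > 0"
        and null: "measure M {v \<in> space M. X w - e < X v \<and> X v \<le> X w + e} = 0"
        unfolding supp_def by (force simp: not_less intro: antisym measure_nonneg)
      obtain q1 where q1: "q1 \<in> \<rat>" "X w - e < q1" "q1 < X w"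
        using Rats_dense_in_real[of "X w - e" "X w"] \<open>e > 0\<close> by auto
      obtain q2 where q2: "q2 \<in> \<rat>" "X w < q2" "q2 < X w + e"
        using Rats_dense_in_real[of "X w" "X w + e"] \<open>e > 0\<close> by auto
      have "prob {v \<in> space M. q1 < X v \<and> X v \<le> q2}
          \<le> prob {v \<in> space M. X w - e < X v \<and> X v \<le> X w + e}"
        using q1 q2 by (intro finite_measure_mono) auto
      then have "(q1, q2) \<in> null_intervals"
        using q1 q2 null by (simp add: null_intervals_def antisym)
      with avoids q1 q2 show False by auto
    qed
  qed
qed

lemma biatomic_AE_two_valued:
  assumes "X \<in> borel_measurable M" "biatomic M X"
  obtains a b where "a < b" "AE w in M. X w = a \<or> X w = b"
proof -
  obtain a b where supp: "supp M X = {a, b}" and "a < b"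
    using \<open>biatomic M X\<close> unfolding biatomic_def card_2_iff
    by (metis insert_commute linorder_neqE_linordered_idom)
  moreover have "AE w in M. X w = a \<or> X w = b"
    using AE_in_supp[OF \<open>X \<in> borel_measurable M\<close>] by (simp add: supp)
  ultimately show ?thesis using that by blast
qed

lemma prob_two_valued:
  fixes X :: "'a \<Rightarrow> real"
  assumes [measurable]: "X \<in> borel_measurable M" "A \<in> sets borel" "Measurable.pred M P"
    and "a \<noteq> b" and two_valued: "AE w in M. X w = a \<or> X w = b"
  shows "prob {w \<in> space M. X w \<in> A \<and> P w}
    = of_bool (a \<in> A) * prob {w \<in> space M. X w = a \<and> P w}
      + of_bool (b \<in> A) * prob {w \<in> space M. X w = b \<and> P w}"
proof -
  have "prob {w \<in> space M. X w \<in> A \<and> P w}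
      = prob ({w \<in> space M. X w = a \<and> a \<in> A \<and> P w} \<union> {w \<in> space M. X w = b \<and> b \<in> A \<and> P w})"
    by (rule finite_measure_eq_AE) (use two_valued in auto)
  also have "\<dots> = prob {w \<in> space M. X w = a \<and> a \<in> A \<and> P w} + prob {w \<in> space M. X w = b \<and> b \<in> A \<and> P w}"
    using \<open>a \<noteq> b\<close> by (intro finite_measure_Union) auto
  finally show ?thesis by (cases "a \<in> A"; cases "b \<in> A") simp_all
qed

lemma prob_two_valued_eq_diff:
  fixes X :: "'a \<Rightarrow> real"
  assumes [measurable]: "X \<in> borel_measurable M" "Measurable.pred M P"
    and "a \<noteq> b" and "AE w in M. X w = a \<or> X w = b"
  shows "prob {w \<in> space M. X w = b \<and> P w}
    = prob {w \<in> space M. P w} - prob {w \<in> space M. X w = a \<and> P w}"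
  using prob_two_valued[of X UNIV P a b] assms by simp

lemma indep_var_two_valued:
  fixes X Y :: "'a \<Rightarrow> real"
  assumes [measurable]: "X \<in> borel_measurable M" "Y \<in> borel_measurable M"
    and "a \<noteq> b" and "AE w in M. X w = a \<or> X w = b"
    and factor: "\<And>y. prob {w \<in> space M. X w = a \<and> Y w \<le> y}
      = prob {w \<in> space M. X w = a} * prob {w \<in> space M. Y w \<le> y}"
  shows "indep_var borel X borel Y"
proof (rule indep_var_if_cdf_factorizes)
  fix x y
  define p where "p = prob {w \<in> space M. X w = a}"
  have "prob {w \<in> space M. X w \<le> x \<and> Y w \<le> y}
      = (of_bool (a \<le> x) * p + of_bool (b \<le> x) * (1 - p)) * prob {w \<in> space M. Y w \<le> y}"
    using prob_two_valued[of X "{..x}" "\<lambda>w. Y w \<le> y" a b]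
      prob_two_valued_eq_diff[of X "\<lambda>w. Y w \<le> y" a b] factor[of y] assms
    by (simp add: p_def algebra_simps)
  moreover have "prob {w \<in> space M. X w \<le> x} = of_bool (a \<le> x) * p + of_bool (b \<le> x) * (1 - p)"
    using prob_two_valued[of X "{..x}" "\<lambda>_. True" a b]
      prob_two_valued_eq_diff[of X "\<lambda>_. True" a b] assms
    by (simp add: p_def prob_space)
  ultimately show "prob {w \<in> space M. X w \<le> x \<and> Y w \<le> y}
      = prob {w \<in> space M. X w \<le> x} * prob {w \<in> space M. Y w \<le> y}"
    by simp
qed simp_all


lemma quasi_indep_two_valued:
  fixes X Y :: "'a \<Rightarrow> real"
  assumes [measurable]: "X \<in> borel_measurable M" "Y \<in> borel_measurable M"
    and "a < b" and two_valued: "AE w in M. X w = a \<or> X w = b"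
    and "quasi_indep M X Y"
  shows "prob {w \<in> space M. X w = a \<and> Y w \<le> y}
    = prob {w \<in> space M. X w = a} * prob {w \<in> space M. Y w \<le> y}"
proof -
  define K where "K z = prob {w \<in> space M. X w = a \<and> Y w \<le> z}" for z
  define G where "G z = cdf1 M Y z" for z
  define p where "p = prob {w \<in> space M. X w = a}"
  have "a \<noteq> b" using \<open>a < b\<close> by simp
  have joint: "cdf2 M X Y x z = of_bool (a \<le> x) * K z + of_bool (b \<le> x) * (G z - K z)" for x z
    using prob_two_valued[of X "{..x}" "\<lambda>w. Y w \<le> z" a b]
      prob_two_valued_eq_diff[of X "\<lambda>w. Y w \<le> z" a b] \<open>a \<noteq> b\<close> two_valued
    by (simp add: cdf2_def cdf1_def K_def G_def)
  have marginal: "cdf1 M X x = of_bool (a \<le> x) * p + of_bool (b \<le> x) * (1 - p)" for x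
    using prob_two_valued[of X "{..x}" "\<lambda>_. True" a b]
      prob_two_valued_eq_diff[of X "\<lambda>_. True" a b] \<open>a \<noteq> b\<close> two_valued
    by (simp add: cdf1_def p_def prob_space)
  have symmetrized: "K z + cdf2 M X Y z a = p * G z + cdf1 M X z * G a" for z
  proof -
    have "(cdf2 M X Y a z + cdf2 M X Y z a) / 2 = cdf1 M X a * G z / 2 + cdf1 M X z * G a / 2"
      using \<open>quasi_indep M X Y\<close> unfolding quasi_indep_def G_def by blast
    then show ?thesis using joint[of a z] marginal[of a] \<open>a < b\<close> by simp
  qed
  have "K a = p * G a"
    using symmetrized[of a] joint[of a a] marginal[of a] \<open>a < b\<close> by simp
  then have "cdf2 M X Y y a = cdf1 M X y * G a"
    by (simp only: joint marginal \<open>K a = p * G a\<close>) (simp add: algebra_simps)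
  then have "K y = p * G y"
    using symmetrized[of y] by simp
  then show ?thesis by (simp add: K_def G_def cdf1_def p_def)
qed

lemma integrable_if_L2: "L2 M Z \<Longrightarrow> integrable M Z"
  unfolding L2_def by (blast intro: square_integrable_imp_integrable)

lemma var_nonzero_if_L2:
  assumes "L2 M Z"
  shows "var M Z \<noteq> 0"
proof
  assume "var M Z = 0"
  have [measurable]: "Z \<in> borel_measurable M" and "integrable M (\<lambda>w. (Z w)\<^sup>2)"
    and non_degenerate: "\<not> (\<exists>c. AE w in M. Z w = c)"
    using assms unfolding L2_def by auto
  define m where "m = expect M Z"
  have "integrable M (\<lambda>w. (Z w - m)\<^sup>2)"
    using \<open>integrable M (\<lambda>w. (Z w)\<^sup>2)\<close> integrable_if_L2[OF assms]
    by (simp add: power2_diff)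
  moreover have "(\<integral>w. (Z w - m)\<^sup>2 \<partial>M) = 0"
    using \<open>var M Z = 0\<close> by (simp add: var_def covar_def expect_def m_def power2_eq_square)
  ultimately have "AE w in M. (Z w - m)\<^sup>2 = 0"
    by (simp add: integral_nonneg_eq_0_iff_AE)
  then have "AE w in M. Z w = m" by eventually_elim simp
  with non_degenerate show False by blast
qed

lemma covar_eq:
  assumes "integrable M Z" "integrable M W" "integrable M (\<lambda>w. Z w * W w)"
  shows "covar M Z W = expect M (\<lambda>w. Z w * W w) - expect M Z * expect M W"
proof -
  have "(\<lambda>w. (Z w - expect M Z) * (W w - expect M W))
      = (\<lambda>w. Z w * W w - expect M W * Z w - expect M Z * W w + expect M Z * expect M W)"
    by (auto simp: algebra_simps)
  then show ?thesis
    using assms by (simp add: covar_def expect_def prob_space)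
qed

lemma covar_of_bool:
  assumes [measurable]: "Measurable.pred M P" "Measurable.pred M Q"
  shows "covar M (\<lambda>w. of_bool (P w)) (\<lambda>w. of_bool (Q w))
    = prob {w \<in> space M. P w \<and> Q w} - prob {w \<in> space M. P w} * prob {w \<in> space M. Q w}"
proof -
  have expect_of_bool: "expect M (\<lambda>w. of_bool (R w)) = prob {w \<in> space M. R w}"
    if [measurable]: "Measurable.pred M R" for R
  proof -
    have "expect M (\<lambda>w. of_bool (R w)) = integral\<^sup>L M (indicator {w \<in> space M. R w})"
      unfolding expect_def by (rule Bochner_Integration.integral_cong) (auto simp: indicator_def)
    then show ?thesis by simp
  qed
  have integrable_of_bool: "integrable M (\<lambda>w. of_bool (R w) :: real)"
    if [measurable]: "Measurable.pred M R" for R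
    by (rule integrable_const_bound[where B=1]) auto
  have "(\<lambda>w. of_bool (P w) * of_bool (Q w)) = (\<lambda>w. of_bool (P w \<and> Q w) :: real)"
    by auto
  then show ?thesis
    by (simp add: covar_eq integrable_of_bool expect_of_bool)
qed

lemma prob_conj_eq_mult_if_AE_const:
  assumes [measurable]: "Measurable.pred M P" "Measurable.pred M Q"
    and const: "AE w in M. P w = c"
  shows "prob {w \<in> space M. P w \<and> Q w} = prob {w \<in> space M. P w} * prob {w \<in> space M. Q w}"
proof (cases c)
  case True
  have "prob {w \<in> space M. P w \<and> Q w} = prob {w \<in> space M. Q w}"
    by (rule finite_measure_eq_AE) (use const True in auto)
  moreover have "prob {w \<in> space M. P w} = prob (space M)"
    by (rule finite_measure_eq_AE) (use const True in auto)
  ultimately show ?thesis by (simp add: prob_space)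
next
  case False
  have "prob {w \<in> space M. P w \<and> Q w} = prob {}" "prob {w \<in> space M. P w} = prob {}"
    by (rule finite_measure_eq_AE; use const False in auto)+
  then show ?thesis by simp
qed

lemma IC0_prob_both_in:
  fixes X Y :: "'a \<Rightarrow> real"
  assumes [measurable]: "X \<in> borel_measurable M" "Y \<in> borel_measurable M" "A \<in> sets borel"
    and "IC0 M X Y"
  shows "prob {w \<in> space M. X w \<in> A \<and> Y w \<in> A}
    = prob {w \<in> space M. X w \<in> A} * prob {w \<in> space M. Y w \<in> A}"
proof -
  have comp_indicator: "indicator A \<circ> Z = (\<lambda>w. of_bool (Z w \<in> A))" for Z :: "'a \<Rightarrow> real"
    by (simp add: fun_eq_iff indicator_def)
  have L2_or_const: "L2 M (indicator A \<circ> Z) \<or> (\<exists>c. AE w in M. (Z w \<in> A) = c)"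
    if [measurable]: "Z \<in> borel_measurable M" for Z
  proof -
    have "integrable M (\<lambda>w. ((indicator A \<circ> Z) w)\<^sup>2 :: real)"
      by (rule integrable_const_bound[where B=1]) (auto simp: indicator_def)
    moreover have "AE w in M. (Z w \<in> A) = (c = 1)" if "AE w in M. (indicator A \<circ> Z) w = c" for c
      using that by eventually_elim (auto simp: indicator_def)
    ultimately show ?thesis unfolding L2_def by auto
  qed
  consider "L2 M (indicator A \<circ> X)" "L2 M (indicator A \<circ> Y)"
    | c where "AE w in M. (X w \<in> A) = c" | c where "AE w in M. (Y w \<in> A) = c"
    using L2_or_const[of X] L2_or_const[of Y] by auto
  then show ?thesis
  proof cases
    case 1
    with \<open>IC0 M X Y\<close> have "corr M (indicator A \<circ> X) (indicator A \<circ> Y) = 0"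
      unfolding IC0_def by (simp add: borel_measurable_indicator)
    then have "covar M (indicator A \<circ> X) (indicator A \<circ> Y) = 0"
      using var_nonzero_if_L2[OF 1(1)] var_nonzero_if_L2[OF 1(2)] by (simp add: corr_def)
    then show ?thesis by (simp add: comp_indicator covar_of_bool)
  next
    case 2
    then show ?thesis by (rule prob_conj_eq_mult_if_AE_const[rotated 2]) measurable
  next
    case 3
    then have "prob {w \<in> space M. Y w \<in> A \<and> X w \<in> A}
        = prob {w \<in> space M. Y w \<in> A} * prob {w \<in> space M. X w \<in> A}"
      by (rule prob_conj_eq_mult_if_AE_const[rotated 2]) measurable
    then show ?thesis by (simp add: conj_commute mult.commute)
  qed
qed

lemma IC0_two_valued:
  fixes X Y :: "'a \<Rightarrow> real"
  assumes [measurable]: "X \<in> borel_measurable M" "Y \<in> borel_measurable M" "B \<in> sets borel"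
    and "a \<noteq> b" and two_valued: "AE w in M. X w = a \<or> X w = b"
    and "IC0 M X Y"
  shows "prob {w \<in> space M. X w = a \<and> Y w \<in> B}
    = prob {w \<in> space M. X w = a} * prob {w \<in> space M. Y w \<in> B}"
proof -
  define D where "D S = prob {w \<in> space M. X w = a \<and> Y w \<in> S}
    - prob {w \<in> space M. X w = a} * prob {w \<in> space M. Y w \<in> S}" for S
  have separating: "D A = 0" if [measurable]: "A \<in> sets borel" and "a \<in> A \<longleftrightarrow> b \<notin> A" for A
  proof -
    have both: "prob {w \<in> space M. X w \<in> A \<and> Y w \<in> A}
        = prob {w \<in> space M. X w \<in> A} * prob {w \<in> space M. Y w \<in> A}"
      using IC0_prob_both_in \<open>IC0 M X Y\<close> by simp
    have b_parts: "prob {w \<in> space M. X w = b \<and> Y w \<in> A}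
        = prob {w \<in> space M. Y w \<in> A} - prob {w \<in> space M. X w = a \<and> Y w \<in> A}"
      "prob {w \<in> space M. X w = b} = 1 - prob {w \<in> space M. X w = a}"
      using prob_two_valued_eq_diff[of X "\<lambda>w. Y w \<in> A" a b]
        prob_two_valued_eq_diff[of X "\<lambda>_. True" a b] \<open>a \<noteq> b\<close> two_valued
      by (simp_all add: prob_space)
    show ?thesis
    proof (cases "a \<in> A")
      case True
      then have "prob {w \<in> space M. X w \<in> A \<and> Y w \<in> A} = prob {w \<in> space M. X w = a \<and> Y w \<in> A}"
        "prob {w \<in> space M. X w \<in> A} = prob {w \<in> space M. X w = a}"
        using prob_two_valued[of X A "\<lambda>w. Y w \<in> A" a b] prob_two_valued[of X A "\<lambda>_. True" a b]
          \<open>a \<noteq> b\<close> two_valued \<open>a \<in> A \<longleftrightarrow> b \<notin> A\<close>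
        by simp_all
      with both have "prob {w \<in> space M. X w = a \<and> Y w \<in> A}
          = prob {w \<in> space M. X w = a} * prob {w \<in> space M. Y w \<in> A}"
        by metis
      then show ?thesis by (simp add: D_def)
    next
      case False
      then have "prob {w \<in> space M. X w \<in> A \<and> Y w \<in> A} = prob {w \<in> space M. X w = b \<and> Y w \<in> A}"
        "prob {w \<in> space M. X w \<in> A} = prob {w \<in> space M. X w = b}"
        using prob_two_valued[of X A "\<lambda>w. Y w \<in> A" a b] prob_two_valued[of X A "\<lambda>_. True" a b]
          \<open>a \<noteq> b\<close> two_valued \<open>a \<in> A \<longleftrightarrow> b \<notin> A\<close>
        by simp_all
      with both b_parts have "prob {w \<in> space M. Y w \<in> A} - prob {w \<in> space M. X w = a \<and> Y w \<in> A}
          = (1 - prob {w \<in> space M. X w = a}) * prob {w \<in> space M. Y w \<in> A}"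
        by metis
      then show ?thesis by (simp add: D_def algebra_simps)
    qed
  qed
  have D_insert: "D (insert c S) = D S + D {c}" if [measurable]: "S \<in> sets borel" and "c \<notin> S" for c S
  proof -
    have "prob {w \<in> space M. P w \<and> Y w \<in> insert c S}
        = prob {w \<in> space M. P w \<and> Y w \<in> S} + prob {w \<in> space M. P w \<and> Y w \<in> {c}}"
      if [measurable]: "Measurable.pred M P" for P
      using \<open>c \<notin> S\<close> by (subst finite_measure_Union[symmetric]) (auto intro!: arg_cong[where f=prob])
    from this[of "\<lambda>w. X w = a"] this[of "\<lambda>_. True"] show ?thesis
      by (simp add: D_def algebra_simps)
  qed
  have "D B = 0"
  proof (cases "a \<in> B \<longleftrightarrow> b \<notin> B")
    case True
    then show ?thesis by (simp add: separating)
  next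
    case False
    then consider "a \<in> B" "b \<in> B" | "a \<notin> B" "b \<notin> B" by blast
    then show ?thesis
    proof cases
      case 1
      then have "D B = D (B - {b}) + D {b}"
        using D_insert[of "B - {b}" b] 1 by (simp add: insert_absorb)
      then show ?thesis using 1 \<open>a \<noteq> b\<close> by (simp add: separating)
    next
      case 2
      then have "D (insert a B) = D B + D {a}" using D_insert[of B a] by simp
      then show ?thesis using 2 \<open>a \<noteq> b\<close> by (simp add: separating)
    qed
  qed
  then show ?thesis by (simp add: D_def)
qed

lemma covar_eq_0_if_indep_var:
  fixes Z W :: "'a \<Rightarrow> real"
  assumes "indep_var borel Z borel W" "integrable M Z" "integrable M W"
  shows "covar M Z W = 0"
proof -
  have "indep_var borel ((\<lambda>x. x - expect M Z) \<circ> Z) borel ((\<lambda>x. x - expect M W) \<circ> W)"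
    using assms(1) by (rule indep_var_compose) auto
  then have "covar M Z W = (\<integral>w. Z w - expect M Z \<partial>M) * (\<integral>w. W w - expect M W \<partial>M)"
    using assms(2,3) unfolding covar_def expect_def
    by (simp add: comp_def indep_var_lebesgue_integral)
  then show ?thesis
    using assms(2,3) by (simp add: expect_def prob_space)
qed

lemma IC0_if_indep_var:
  fixes X Y :: "'a \<Rightarrow> real"
  assumes "L2 M X" "L2 M Y" and indep: "indep_var borel X borel Y"
  shows "IC0 M X Y"
proof -
  have "covar M (g \<circ> X) (g \<circ> Y) = 0"
    if "g \<in> borel_measurable borel" "L2 M (g \<circ> X)" "L2 M (g \<circ> Y)" for g :: "real \<Rightarrow> real"
    using indep_var_compose[OF indep that(1) that(1)] that(2,3)
    by (simp add: covar_eq_0_if_indep_var integrable_if_L2)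
  moreover have "covar M X Y = 0"
    using assms by (simp add: covar_eq_0_if_indep_var integrable_if_L2)
  ultimately show ?thesis
    unfolding IC0_def corr_def by simp
qed

end

theorem proposition4:
  fixes M :: "'a measure" and X Y :: "'a \<Rightarrow> real"
  assumes "prob_space M"
    and "L2 M X" and "L2 M Y"
    and "biatomic M X"
  shows "(quasi_indep M X Y \<longrightarrow> prob_space.indep_var M borel X borel Y)
    \<and> (IC0 M X Y \<longleftrightarrow> prob_space.indep_var M borel X borel Y)"
proof -
  interpret prob_space M by fact
  have X_borel[measurable]: "X \<in> borel_measurable M" and Y_borel[measurable]: "Y \<in> borel_measurable M"
    using \<open>L2 M X\<close> \<open>L2 M Y\<close> unfolding L2_def by auto
  obtain a b where "a < b" and two_valued: "AE w in M. X w = a \<or> X w = b"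
    using biatomic_AE_two_valued[OF X_borel \<open>biatomic M X\<close>] by blast
  then have "a \<noteq> b" by simp
  have "indep_var borel X borel Y" if "quasi_indep M X Y"
    using quasi_indep_two_valued[OF X_borel Y_borel \<open>a < b\<close> two_valued that]
    by (rule indep_var_two_valued[OF X_borel Y_borel \<open>a \<noteq> b\<close> two_valued])
  moreover have "indep_var borel X borel Y" if "IC0 M X Y"
    using IC0_two_valued[OF X_borel Y_borel atMost_borel \<open>a \<noteq> b\<close> two_valued that]
    by (intro indep_var_two_valued[OF X_borel Y_borel \<open>a \<noteq> b\<close> two_valued]) simp
  moreover have "IC0 M X Y" if "indep_var borel X borel Y"
    using \<open>L2 M X\<close> \<open>L2 M Y\<close> that by (rule IC0_if_indep_var)
  ultimately show ?thesis by blast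
qed

end
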